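(* Let $F\colon[0,1]^*\to\mathbb{R}$ be a standard function such that $F_1$ is strictly increasing (resp. strictly decreasing). Then the following are equivalent: (1) $F$ is preassociative and unarily quasi-range-idempotent, and $F_2$ is symmetric, nondecreasing (resp. nonincreasing) in each argument, and satisfies $F_2(1,x)=F_1(x)$ for every $x\in[0,1]$; (2) there exist a strictly increasing (resp. strictly decreasing) function $f\colon[0,1]\to\mathbb{R}$ and a variadic t-norm $H\colon[0,1]^*\to[0,1]\cup\{\varepsilon\}$ such that $F^{\flat}=f\circ H^{\flat}$. In this case $f=F_1$.
   Context: $X^*=\bigcup_{n\geqslant 0}X^n$ denotes the finite tuples over $X$, $X^0=\{\varepsilon\}$ with $\varepsilon\notin X$ the empty tuple; $F(\mathbf{x},\mathbf{y})$ denotes $F$ applied to the concatenation, concatenation with $\varepsilon$ leaving tuples unchanged. $F_n=F|_{X^n}$, $F^{\flat}=F|_{X^*\setminus\{\varepsilon\}}$. $F$ is standard if $F(\mathbf{x})=F(\varepsilon)$ only for $\mathbf{x}=\varepsilon$. $F$ is preassociative if for all tuples $\mathbf{x},\mathbf{y},\mathbf{y}',\mathbf{z}$, $F(\mathbf{y})=F(\mathbf{y}')$ implies $F(\mathbf{x},\mathbf{y},\mathbf{z})=F(\mathbf{x},\mathbf{y}',\mathbf{z})$. $F$ is unarily quasi-range-idempotent if $\mathrm{ran}(F_1)=\mathrm{ran}(F^{\flat})$. An operation $H\colon X^*\to X\cup\{\varepsilon\}$ is $\varepsilon$-standard if $H(\varepsilon)=\varepsilon$ and $H(\mathbf{x})\neq\varepsilon$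 for $\mathbf{x}\neq\varepsilon$, and associative if $H(\mathbf{x},\mathbf{y},\mathbf{z})=H(\mathbf{x},H(\mathbf{y}),\mathbf{z})$ for all tuples (a value $\varepsilon$ treated as the empty tuple). A t-norm is an operation $T\colon[0,1]^2\to[0,1]$ that is nondecreasing in each argument, symmetric, associative, and satisfies $T(1,x)=x$ for all $x$. A variadic t-norm is an associative $\varepsilon$-standard operation $H\colon[0,1]^*\to[0,1]\cup\{\varepsilon\}$ whose binary part $H_2$ is a t-norm. *)

theory Defs
  imports Complex_Main
begin

text \<open>An operation H with values in
  [0,1] union {epsilon} is modelled as a map into real option, None standing for epsilon.\<close>

definition I01 :: "real set" where "I01 = {0..1}"

definition tuples :: "real list set" where "tuples = {xs. set xs \<subseteq> I01}"

definition standard :: "(real list \<Rightarrow> real) \<Rightarrow> bool" where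
  "standard F \<longleftrightarrow> (\<forall>xs\<in>tuples. F xs = F [] \<longrightarrow> xs = [])"

definition preassociative :: "(real list \<Rightarrow> real) \<Rightarrow> bool" where
  "preassociative F \<longleftrightarrow> (\<forall>x\<in>tuples. \<forall>y\<in>tuples. \<forall>y'\<in>tuples. \<forall>z\<in>tuples.
      F y = F y' \<longrightarrow> F (x @ y @ z) = F (x @ y' @ z))"

definition unarily_quasi_range_idempotent :: "(real list \<Rightarrow> real) \<Rightarrow> bool" where
  "unarily_quasi_range_idempotent F \<longleftrightarrow>
     (\<lambda>x. F [x]) ` I01 = F ` (tuples - {[]})"

definition strict_incr_on :: "real set \<Rightarrow> (real \<Rightarrow> real) \<Rightarrow> bool" where
  "strict_incr_on S f \<longleftrightarrow> (\<forall>x\<in>S. \<forall>y\<in>S. x < y \<longrightarrow> f x < f y)"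

definition strict_decr_on :: "real set \<Rightarrow> (real \<Rightarrow> real) \<Rightarrow> bool" where
  "strict_decr_on S f \<longleftrightarrow> (\<forall>x\<in>S. \<forall>y\<in>S. x < y \<longrightarrow> f x > f y)"

definition symmetric2 :: "(real list \<Rightarrow> real) \<Rightarrow> bool" where
  "symmetric2 F \<longleftrightarrow> (\<forall>x\<in>I01. \<forall>y\<in>I01. F [x, y] = F [y, x])"

definition nondecr2 :: "(real list \<Rightarrow> real) \<Rightarrow> bool" where
  "nondecr2 F \<longleftrightarrow> (\<forall>x\<in>I01. \<forall>x'\<in>I01. \<forall>y\<in>I01. x \<le> x' \<longrightarrow>
      F [x, y] \<le> F [x', y] \<and> F [y, x] \<le> F [y, x'])"

definition nonincr2 :: "(real list \<Rightarrow> real) \<Rightarrow> bool" where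
  "nonincr2 F \<longleftrightarrow> (\<forall>x\<in>I01. \<forall>x'\<in>I01. \<forall>y\<in>I01. x \<le> x' \<longrightarrow>
      F [x, y] \<ge> F [x', y] \<and> F [y, x] \<ge> F [y, x'])"

definition unit1_2 :: "(real list \<Rightarrow> real) \<Rightarrow> bool" where
  "unit1_2 F \<longleftrightarrow> (\<forall>x\<in>I01. F [1, x] = F [x])"

definition opt_tuple :: "real option \<Rightarrow> real list" where
  "opt_tuple v = (case v of None \<Rightarrow> [] | Some a \<Rightarrow> [a])"

definition valued_in :: "(real list \<Rightarrow> real option) \<Rightarrow> bool" where
  "valued_in H \<longleftrightarrow> (\<forall>xs\<in>tuples. H xs = None \<or> (\<exists>a\<in>I01. H xs = Some a))"

definition eps_standard :: "(real list \<Rightarrow> real option) \<Rightarrow> bool" where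
  "eps_standard H \<longleftrightarrow> H [] = None \<and> (\<forall>xs\<in>tuples. xs \<noteq> [] \<longrightarrow> H xs \<noteq> None)"

definition associative_op :: "(real list \<Rightarrow> real option) \<Rightarrow> bool" where
  "associative_op H \<longleftrightarrow> (\<forall>x\<in>tuples. \<forall>y\<in>tuples. \<forall>z\<in>tuples.
      H (x @ y @ z) = H (x @ opt_tuple (H y) @ z))"

definition t_norm :: "(real \<Rightarrow> real \<Rightarrow> real) \<Rightarrow> bool" where
  "t_norm T \<longleftrightarrow>
     (\<forall>x\<in>I01. \<forall>y\<in>I01. T x y \<in> I01) \<and>
     (\<forall>x\<in>I01. \<forall>x'\<in>I01. \<forall>y\<in>I01. x \<le> x' \<longrightarrow> T x y \<le> T x' y \<and> T y x \<le> T y x') \<and>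
     (\<forall>x\<in>I01. \<forall>y\<in>I01. T x y = T y x) \<and>
     (\<forall>x\<in>I01. \<forall>y\<in>I01. \<forall>z\<in>I01. T (T x y) z = T x (T y z)) \<and>
     (\<forall>x\<in>I01. T 1 x = x)"

definition variadic_t_norm :: "(real list \<Rightarrow> real option) \<Rightarrow> bool" where
  "variadic_t_norm H \<longleftrightarrow> valued_in H \<and> eps_standard H \<and> associative_op H \<and>
     t_norm (\<lambda>x y. the (H [x, y]))"

end

theory Submission
  imports Defs
begin

text \<open>For (2) implies (1), every property of F transfers along the factorisation, and
  H [x] = x forces f = F_1. For (1) implies (2), unary quasi-range-idempotence and injectivity
  of F_1 pull each value F xs back to a unique point H xs of [0,1] with F_1 (H xs) = F xs;
  preassociativity of F then becomes associativity of H, and the conditions on F_2 become the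
  t-norm axioms of H_2. The decreasing case is the increasing one applied to -F.\<close>

definition flat_factorization ::
    "(real list \<Rightarrow> real) \<Rightarrow> (real \<Rightarrow> real) \<Rightarrow> (real list \<Rightarrow> real option) \<Rightarrow> bool" where
  "flat_factorization F f H \<longleftrightarrow> (\<forall>xs\<in>tuples. xs \<noteq> [] \<longrightarrow> F xs = f (the (H xs)))"

definition induced_op :: "(real list \<Rightarrow> real) \<Rightarrow> real list \<Rightarrow> real option" where
  "induced_op F xs = (if xs = [] then None else Some (the_inv_into I01 (\<lambda>x. F [x]) (F xs)))"

lemma one_in_I01 [simp]: "1 \<in> I01"
  by (simp add: I01_def)

lemma Nil_in_tuples [simp]: "[] \<in> tuples"
  by (simp add: tuples_def)

lemma Cons_in_tuples_iff [simp]: "x # xs \<in> tuples \<longleftrightarrow> x \<in> I01 \<and> xs \<in> tuples"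
  by (simp add: tuples_def)

lemma append_in_tuples_iff [simp]: "xs @ ys \<in> tuples \<longleftrightarrow> xs \<in> tuples \<and> ys \<in> tuples"
  by (auto simp: tuples_def)

lemma preassociativeD:
  "preassociative F \<Longrightarrow> x \<in> tuples \<Longrightarrow> y \<in> tuples \<Longrightarrow> y' \<in> tuples \<Longrightarrow> z \<in> tuples
    \<Longrightarrow> F y = F y' \<Longrightarrow> F (x @ y @ z) = F (x @ y' @ z)"
  unfolding preassociative_def by blast

lemma strict_incr_on_iff_strict_mono_on: "strict_incr_on S f \<longleftrightarrow> strict_mono_on S f"
  by (auto simp: strict_incr_on_def monotone_on_def)

lemma strict_incr_on_uminus_iff: "strict_incr_on S (\<lambda>x. - f x) \<longleftrightarrow> strict_decr_on S f"
  by (simp add: strict_incr_on_def strict_decr_on_def)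

lemma nondecr2_uminus_iff: "nondecr2 (\<lambda>xs. - F xs) \<longleftrightarrow> nonincr2 F"
  by (simp add: nondecr2_def nonincr2_def)

lemma standard_uminus_iff: "standard (\<lambda>xs. - F xs) \<longleftrightarrow> standard F"
  by (simp add: standard_def)

lemma preassociative_uminus_iff: "preassociative (\<lambda>xs. - F xs) \<longleftrightarrow> preassociative F"
  by (simp add: preassociative_def)

lemma unarily_quasi_range_idempotent_uminus_iff:
  "unarily_quasi_range_idempotent (\<lambda>xs. - F xs) \<longleftrightarrow> unarily_quasi_range_idempotent F"
proof -
  have "(\<lambda>x. - F [x]) ` I01 = uminus ` (\<lambda>x. F [x]) ` I01"
    and "(\<lambda>xs. - F xs) ` (tuples - {[]}) = uminus ` F ` (tuples - {[]})"
    by (simp_all add: image_image)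
  then show ?thesis
    by (simp add: unarily_quasi_range_idempotent_def inj_image_eq_iff[OF inj_uminus])
qed

lemma symmetric2_uminus_iff: "symmetric2 (\<lambda>xs. - F xs) \<longleftrightarrow> symmetric2 F"
  by (simp add: symmetric2_def)

lemma unit1_2_uminus_iff: "unit1_2 (\<lambda>xs. - F xs) \<longleftrightarrow> unit1_2 F"
  by (simp add: unit1_2_def)

lemma flat_factorization_uminus_iff:
  "flat_factorization (\<lambda>xs. - F xs) (\<lambda>x. - f x) H \<longleftrightarrow> flat_factorization F f H"
  by (simp add: flat_factorization_def)

lemma ex_decr_flat_factorization_iff_uminus:
  "(\<exists>f H. strict_decr_on S f \<and> variadic_t_norm H \<and> flat_factorization F f H)
    \<longleftrightarrow> (\<exists>g H. strict_incr_on S g \<and> variadic_t_norm H \<and> flat_factorization (\<lambda>xs. - F xs) g H)"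
proof
  assume "\<exists>f H. strict_decr_on S f \<and> variadic_t_norm H \<and> flat_factorization F f H"
  then obtain f H where "strict_decr_on S f" "variadic_t_norm H" "flat_factorization F f H"
    by blast
  then show "\<exists>g H. strict_incr_on S g \<and> variadic_t_norm H \<and> flat_factorization (\<lambda>xs. - F xs) g H"
    by (metis strict_incr_on_uminus_iff flat_factorization_uminus_iff)
next
  assume "\<exists>g H. strict_incr_on S g \<and> variadic_t_norm H \<and> flat_factorization (\<lambda>xs. - F xs) g H"
  then obtain g H where "strict_incr_on S g" "variadic_t_norm H"
    "flat_factorization (\<lambda>xs. - F xs) g H"
    by blast
  then have "strict_decr_on S (\<lambda>x. - g x)" "flat_factorization F (\<lambda>x. - g x) H"
    using strict_incr_on_uminus_iff[of S "\<lambda>x. - g x"]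
      flat_factorization_uminus_iff[of F "\<lambda>x. - g x" H]
    by simp_all
  with \<open>variadic_t_norm H\<close>
  show "\<exists>f H. strict_decr_on S f \<and> variadic_t_norm H \<and> flat_factorization F f H"
    by blast
qed

lemma t_norm_closed: "t_norm T \<Longrightarrow> x \<in> I01 \<Longrightarrow> y \<in> I01 \<Longrightarrow> T x y \<in> I01"
  unfolding t_norm_def by blast

lemma t_norm_mono:
  "t_norm T \<Longrightarrow> x \<in> I01 \<Longrightarrow> x' \<in> I01 \<Longrightarrow> y \<in> I01 \<Longrightarrow> x \<le> x'
    \<Longrightarrow> T x y \<le> T x' y \<and> T y x \<le> T y x'"
  unfolding t_norm_def by blast

lemma t_norm_commute: "t_norm T \<Longrightarrow> x \<in> I01 \<Longrightarrow> y \<in> I01 \<Longrightarrow> T x y = T y x"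
  unfolding t_norm_def by blast

lemma t_norm_one_left: "t_norm T \<Longrightarrow> x \<in> I01 \<Longrightarrow> T 1 x = x"
  unfolding t_norm_def by blast

context
  fixes H :: "real list \<Rightarrow> real option"
  assumes H: "variadic_t_norm H"
begin

lemma variadic_t_norm_value:
  assumes "xs \<in> tuples" "xs \<noteq> []"
  obtains a where "a \<in> I01" "H xs = Some a"
  using H assms unfolding variadic_t_norm_def valued_in_def eps_standard_def by blast

lemma variadic_t_norm_assoc:
  "x \<in> tuples \<Longrightarrow> y \<in> tuples \<Longrightarrow> z \<in> tuples \<Longrightarrow> H (x @ y @ z) = H (x @ opt_tuple (H y) @ z)"
  using H unfolding variadic_t_norm_def associative_op_def by blast

lemma variadic_t_norm_binary: "t_norm (\<lambda>x y. the (H [x, y]))"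
  using H unfolding variadic_t_norm_def by blast

text \<open>Associativity gives H [1, x] = H [1, H [x]], and 1 is neutral for H_2.\<close>
lemma variadic_t_norm_singleton:
  assumes x: "x \<in> I01"
  shows "H [x] = Some x"
proof -
  obtain a where a: "a \<in> I01" "H [x] = Some a"
    using variadic_t_norm_value[of "[x]"] x by auto
  have "H [1, x] = H [1, a]"
    using variadic_t_norm_assoc[of "[1]" "[x]" "[]"] x a by (simp add: opt_tuple_def)
  then have "x = a"
    using t_norm_one_left[OF variadic_t_norm_binary] x a(1) by metis
  with a show ?thesis by simp
qed

end

context
  fixes F :: "real list \<Rightarrow> real" and f :: "real \<Rightarrow> real" and H :: "real list \<Rightarrow> real option"
  assumes H: "variadic_t_norm H" and fac: "flat_factorization F f H"
begin

lemma flat_factorizationD: "xs \<in> tuples \<Longrightarrow> xs \<noteq> [] \<Longrightarrow> F xs = f (the (H xs))"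
  using fac by (simp add: flat_factorization_def)

lemma flat_factorization_unary: "x \<in> I01 \<Longrightarrow> F [x] = f x"
  using flat_factorizationD[of "[x]"] variadic_t_norm_singleton[OF H] by simp

lemma flat_factorization_binary: "x \<in> I01 \<Longrightarrow> y \<in> I01 \<Longrightarrow> F [x, y] = f (the (H [x, y]))"
  by (simp add: flat_factorizationD)

lemma flat_factorization_preassociative:
  assumes st: "standard F" and inj: "inj_on f I01"
  shows "preassociative F"
  unfolding preassociative_def
proof (intro ballI impI)
  fix x y y' z assume tup: "x \<in> tuples" "y \<in> tuples" "y' \<in> tuples" "z \<in> tuples"
    and eq: "F y = F y'"
  have empty_iff: "y = [] \<longleftrightarrow> y' = []"
    using st tup eq unfolding standard_def by metis
  show "F (x @ y @ z) = F (x @ y' @ z)"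
  proof (cases "y = []")
    case False
    with empty_iff have y': "y' \<noteq> []" by simp
    obtain a where a: "a \<in> I01" "H y = Some a" using H tup(2) False by (rule variadic_t_norm_value)
    obtain b where b: "b \<in> I01" "H y' = Some b" using H tup(3) y' by (rule variadic_t_norm_value)
    have "f a = f b"
      using eq a b flat_factorizationD[OF tup(2) False] flat_factorizationD[OF tup(3) y'] by simp
    with inj a b have "H y = H y'" by (simp add: inj_on_eq_iff)
    then have "H (x @ y @ z) = H (x @ y' @ z)"
      using variadic_t_norm_assoc[OF H] tup by metis
    with tup False y' show ?thesis by (simp add: flat_factorizationD)
  qed (use empty_iff in simp)
qed

lemma flat_factorization_unarily_quasi_range_idempotent: "unarily_quasi_range_idempotent F"
  unfolding unarily_quasi_range_idempotent_def
proof
  show "(\<lambda>x. F [x]) ` I01 \<subseteq> F ` (tuples - {[]})"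
    by auto
  show "F ` (tuples - {[]}) \<subseteq> (\<lambda>x. F [x]) ` I01"
  proof
    fix v assume "v \<in> F ` (tuples - {[]})"
    then obtain xs where xs: "xs \<in> tuples" "xs \<noteq> []" and v: "v = F xs" by auto
    obtain a where a: "a \<in> I01" "H xs = Some a" using H xs by (rule variadic_t_norm_value)
    have "v = F [a]"
      using v a flat_factorizationD[OF xs] flat_factorization_unary by simp
    with a show "v \<in> (\<lambda>x. F [x]) ` I01" by blast
  qed
qed

lemma flat_factorization_symmetric2: "symmetric2 F"
  using t_norm_commute[OF variadic_t_norm_binary[OF H]]
  by (simp add: symmetric2_def flat_factorization_binary)

lemma flat_factorization_unit1_2: "unit1_2 F"
  using t_norm_one_left[OF variadic_t_norm_binary[OF H]]
  by (simp add: unit1_2_def flat_factorization_binary flat_factorization_unary)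

lemma flat_factorization_nondecr2:
  assumes mono: "mono_on I01 f"
  shows "nondecr2 F"
  unfolding nondecr2_def
proof (intro ballI impI)
  fix x x' y assume xy: "x \<in> I01" "x' \<in> I01" "y \<in> I01" "x \<le> x'"
  let ?T = "\<lambda>x y. the (H [x, y])"
  have T: "t_norm ?T" by (rule variadic_t_norm_binary[OF H])
  have "f (?T x y) \<le> f (?T x' y)" "f (?T y x) \<le> f (?T y x')"
    using t_norm_mono[OF T xy] t_norm_closed[OF T] xy
    by (auto intro: monotone_onD[OF mono])
  with xy show "F [x, y] \<le> F [x', y] \<and> F [y, x] \<le> F [y, x']"
    by (simp add: flat_factorization_binary)
qed

end

lemma induced_op_cong:
  "F xs = F ys \<Longrightarrow> xs \<noteq> [] \<Longrightarrow> ys \<noteq> [] \<Longrightarrow> induced_op F xs = induced_op F ys"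
  by (simp add: induced_op_def)

context
  fixes F :: "real list \<Rightarrow> real"
  assumes incr: "strict_mono_on I01 (\<lambda>x. F [x])"
    and range: "unarily_quasi_range_idempotent F"
begin

lemma inj_on_unary: "inj_on (\<lambda>x. F [x]) I01"
  using incr by (rule strict_mono_on_imp_inj_on)

lemma unary_range_contains_value: "xs \<in> tuples \<Longrightarrow> xs \<noteq> [] \<Longrightarrow> F xs \<in> (\<lambda>x. F [x]) ` I01"
  using range unfolding unarily_quasi_range_idempotent_def by blast

lemma induced_op_value:
  assumes xs: "xs \<in> tuples" "xs \<noteq> []"
  shows "the (induced_op F xs) \<in> I01" and "F [the (induced_op F xs)] = F xs"
proof -
  have "F xs \<in> (\<lambda>x. F [x]) ` I01"
    using xs by (rule unary_range_contains_value)
  from the_inv_into_into[OF inj_on_unary this order_refl] f_the_inv_into_f[OF inj_on_unary this]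
  show "the (induced_op F xs) \<in> I01" and "F [the (induced_op F xs)] = F xs"
    using xs(2) by (simp_all add: induced_op_def)
qed

lemma induced_op_eqI: "a \<in> I01 \<Longrightarrow> F [a] = F xs \<Longrightarrow> xs \<noteq> [] \<Longrightarrow> induced_op F xs = Some a"
  using the_inv_into_f_eq[OF inj_on_unary, of a "F xs"] by (simp add: induced_op_def)

lemma induced_op_mono:
  assumes "xs \<in> tuples" "xs \<noteq> []" "ys \<in> tuples" "ys \<noteq> []" "F xs \<le> F ys"
  shows "the (induced_op F xs) \<le> the (induced_op F ys)"
proof -
  have "F [the (induced_op F xs)] \<le> F [the (induced_op F ys)]"
    using assms by (simp add: induced_op_value)
  with strict_mono_on_less_eq[OF incr] show ?thesis
    using assms by (simp add: induced_op_value(1))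
qed

lemma flat_factorization_induced_op: "flat_factorization F (\<lambda>x. F [x]) (induced_op F)"
  by (simp add: flat_factorization_def induced_op_value)

lemma induced_op_assoc:
  assumes pa: "preassociative F" and tup: "x \<in> tuples" "y \<in> tuples" "z \<in> tuples" and y: "y \<noteq> []"
  shows "F (x @ [the (induced_op F y)] @ z) = F (x @ y @ z)"
  using tup induced_op_value[OF tup(2) y] by (intro preassociativeD[OF pa]) simp_all

lemma associative_op_induced_op:
  assumes pa: "preassociative F"
  shows "associative_op (induced_op F)"
  unfolding associative_op_def
proof (intro ballI)
  fix x y z assume tup: "x \<in> tuples" "y \<in> tuples" "z \<in> tuples"
  show "induced_op F (x @ y @ z) = induced_op F (x @ opt_tuple (induced_op F y) @ z)"
  proof (cases "y = []")
    case False
    then have "opt_tuple (induced_op F y) = [the (induced_op F y)]"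
      by (simp add: induced_op_def opt_tuple_def)
    with induced_op_assoc[OF pa tup False] False show ?thesis
      by (metis induced_op_cong Nil_is_append_conv not_Cons_self2)
  qed (simp add: induced_op_def opt_tuple_def)
qed

lemma t_norm_induced_op:
  assumes pa: "preassociative F" and sym: "symmetric2 F" and mono: "nondecr2 F"
    and unit: "unit1_2 F"
  shows "t_norm (\<lambda>x y. the (induced_op F [x, y]))" (is "t_norm ?T")
  unfolding t_norm_def
proof (intro conjI)
  show "\<forall>x\<in>I01. \<forall>y\<in>I01. ?T x y \<in> I01"
    by (simp add: induced_op_value)
  show "\<forall>x\<in>I01. \<forall>x'\<in>I01. \<forall>y\<in>I01. x \<le> x' \<longrightarrow> ?T x y \<le> ?T x' y \<and> ?T y x \<le> ?T y x'"
    using mono unfolding nondecr2_def by (simp add: induced_op_mono)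
  show "\<forall>x\<in>I01. \<forall>y\<in>I01. ?T x y = ?T y x"
    using sym unfolding symmetric2_def by (metis induced_op_cong list.distinct(1))
  show "\<forall>x\<in>I01. \<forall>y\<in>I01. \<forall>z\<in>I01. ?T (?T x y) z = ?T x (?T y z)"
  proof (intro ballI)
    fix x y z assume xyz: "x \<in> I01" "y \<in> I01" "z \<in> I01"
    have "F [?T x y, z] = F [x, ?T y z]"
      using induced_op_assoc[OF pa, of "[]" "[x, y]" "[z]"]
        induced_op_assoc[OF pa, of "[x]" "[y, z]" "[]"] xyz by simp
    then show "?T (?T x y) z = ?T x (?T y z)"
      by (metis induced_op_cong list.distinct(1))
  qed
  show "\<forall>x\<in>I01. ?T 1 x = x"
    using unit by (simp add: unit1_2_def induced_op_eqI)
qed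

lemma variadic_t_norm_induced_op:
  assumes "preassociative F" "symmetric2 F" "nondecr2 F" "unit1_2 F"
  shows "variadic_t_norm (induced_op F)"
proof -
  have "valued_in (induced_op F)"
    unfolding valued_in_def by (metis induced_op_def induced_op_value(1) option.sel)
  moreover have "eps_standard (induced_op F)"
    by (simp add: eps_standard_def induced_op_def)
  ultimately show ?thesis
    using assms associative_op_induced_op t_norm_induced_op
    by (simp add: variadic_t_norm_def)
qed

end

lemma nondecr_preassociative_iff_flat_factorization:
  assumes st: "standard F" and incr: "strict_incr_on I01 (\<lambda>x. F [x])"
  shows "(preassociative F \<and> unarily_quasi_range_idempotent F \<and> symmetric2 F \<and> nondecr2 F
            \<and> unit1_2 F)
    \<longleftrightarrow> (\<exists>f H. strict_incr_on I01 f \<and> variadic_t_norm H \<and> flat_factorization F f H)"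
proof
  assume "preassociative F \<and> unarily_quasi_range_idempotent F \<and> symmetric2 F \<and> nondecr2 F
            \<and> unit1_2 F"
  with incr show "\<exists>f H. strict_incr_on I01 f \<and> variadic_t_norm H \<and> flat_factorization F f H"
    unfolding strict_incr_on_iff_strict_mono_on
    using variadic_t_norm_induced_op flat_factorization_induced_op by blast
next
  assume "\<exists>f H. strict_incr_on I01 f \<and> variadic_t_norm H \<and> flat_factorization F f H"
  then obtain f H where "strict_mono_on I01 f" "variadic_t_norm H" "flat_factorization F f H"
    by (auto simp: strict_incr_on_iff_strict_mono_on)
  then show "preassociative F \<and> unarily_quasi_range_idempotent F \<and> symmetric2 F \<and> nondecr2 F
            \<and> unit1_2 F"
    using st strict_mono_on_imp_inj_on strict_mono_on_imp_mono_on
      flat_factorization_preassociative flat_factorization_unarily_quasi_range_idempotent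
      flat_factorization_symmetric2 flat_factorization_nondecr2 flat_factorization_unit1_2
    by metis
qed

theorem theorem5p3:
  fixes F :: "real list \<Rightarrow> real"
  assumes "standard F"
  shows
   "(strict_incr_on I01 (\<lambda>x. F [x]) \<longrightarrow>
      ((preassociative F \<and> unarily_quasi_range_idempotent F \<and> symmetric2 F \<and> nondecr2 F
          \<and> unit1_2 F)
        \<longleftrightarrow> (\<exists>f H. strict_incr_on I01 f \<and> variadic_t_norm H \<and>
               (\<forall>xs\<in>tuples. xs \<noteq> [] \<longrightarrow> F xs = f (the (H xs))))) \<and>
      (\<forall>f H. strict_incr_on I01 f \<and> variadic_t_norm H \<and>
               (\<forall>xs\<in>tuples. xs \<noteq> [] \<longrightarrow> F xs = f (the (H xs)))
         \<longrightarrow> (\<forall>x\<in>I01. f x = F [x])))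
    \<and>
    (strict_decr_on I01 (\<lambda>x. F [x]) \<longrightarrow>
      ((preassociative F \<and> unarily_quasi_range_idempotent F \<and> symmetric2 F \<and> nonincr2 F
          \<and> unit1_2 F)
        \<longleftrightarrow> (\<exists>f H. strict_decr_on I01 f \<and> variadic_t_norm H \<and>
               (\<forall>xs\<in>tuples. xs \<noteq> [] \<longrightarrow> F xs = f (the (H xs))))) \<and>
      (\<forall>f H. strict_decr_on I01 f \<and> variadic_t_norm H \<and>
               (\<forall>xs\<in>tuples. xs \<noteq> [] \<longrightarrow> F xs = f (the (H xs)))
         \<longrightarrow> (\<forall>x\<in>I01. f x = F [x])))"
proof -
  have unique: "\<forall>x\<in>I01. f x = F [x]" if "variadic_t_norm H" "flat_factorization F f H" for f H
    using flat_factorization_unary[OF that] by simp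
  let ?G = "\<lambda>xs. - F xs"
  have "strict_decr_on I01 (\<lambda>x. F [x]) \<Longrightarrow>
      (preassociative F \<and> unarily_quasi_range_idempotent F \<and> symmetric2 F \<and> nonincr2 F
          \<and> unit1_2 F)
      \<longleftrightarrow> (\<exists>f H. strict_decr_on I01 f \<and> variadic_t_norm H \<and> flat_factorization F f H)"
    using nondecr_preassociative_iff_flat_factorization[of ?G] assms
    unfolding ex_decr_flat_factorization_iff_uminus
    by (simp only: strict_incr_on_uminus_iff nondecr2_uminus_iff standard_uminus_iff
        preassociative_uminus_iff unarily_quasi_range_idempotent_uminus_iff
        symmetric2_uminus_iff unit1_2_uminus_iff)
  with nondecr_preassociative_iff_flat_factorization[OF assms] unique show ?thesis
    unfolding flat_factorization_def by blast
qed

end
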